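(* Let $T$ be a finite set, let $(X_t)_{t\in T}$ be a random process with $\mathbf{E}|X_t|<\infty$ for all $t$, and let $(m_t)_{t\in T}$ be real numbers. Then $$\mathbf{E}\Big[\sup_{t\in T}\{X_t+m_t\}\Big]=\sup_{\mu}\Big\{\mathscr{F}(X,\mu)+\sum_{t\in T} m_t\,\mu(\{t\})\Big\},$$ where the supremum is over all probability measures $\mu$ on $T$.
   Context: For a finite set $T$, a probability measure $P_X$ on $\mathbb{R}^T$ with $\int\|x\|\,P_X(dx)<\infty$ and a probability measure $\mu$ on $T$, Fernique's functional is $\mathscr{F}(P_X,\mu)=\sup \mathbf{E}[X_Z]$, where the supremum is over all couplings $(X,Z)$ (pairs of random variables on a common probability space) with $X\sim P_X$ and $Z\sim\mu$. For a random process $X=(X_t)_{t\in T}$ one writes $\mathscr{F}(X,\mu)=\mathscr{F}(P_X,\mu)$ with $P_X$ the law of $X$. *)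

theory Defs
  imports "HOL-Probability.Probability"
begin

text \<open>Couplings of a law P on R^T (here real^'t) and a probability mu on the finite
type 't, represented by their joint law: a probability measure on
R^T x T whose marginals are P and mu.\<close>

definition coupling :: "(real^'t) measure \<Rightarrow> ('t::finite) pmf \<Rightarrow> ((real^'t) \<times> 't) measure \<Rightarrow> bool" where
  "coupling P \<mu> C \<longleftrightarrow> prob_space C \<and>
     sets C = sets (borel \<Otimes>\<^sub>M count_space UNIV) \<and>
     distr C borel fst = P \<and>
     distr C (count_space UNIV) snd = measure_pmf \<mu>"

definition fernique :: "(real^'t) measure \<Rightarrow> ('t::finite) pmf \<Rightarrow> real" where
  "fernique P \<mu> = Sup {(\<integral>p. (fst p) $ (snd p) \<partial>C) | C. coupling P \<mu> C}"

end

theory Submission imports Defs begin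

text \<open>For every coupling, \<open>X\<^sub>Z + m\<^sub>Z \<le> max\<^sub>t (X\<^sub>t + m\<^sub>t)\<close> pointwise; integrating gives
\<open>\<F>(X, \<mu>) + \<Sum>\<^sub>t m\<^sub>t \<mu>{t} \<le> E max\<^sub>t (X\<^sub>t + m\<^sub>t)\<close> for every \<open>\<mu>\<close>. Conversely, a measurable
selection \<open>Z\<close> of a maximising index couples \<open>X\<close> with the law \<open>\<mu>\<close> of \<open>Z\<close>, and for this
coupling the inequality is an equality.\<close>

lemma borel_measurable_vec_lambda[measurable]:
  fixes f :: "'t::finite \<Rightarrow> 'a \<Rightarrow> real"
  assumes [measurable]: "\<And>t. f t \<in> borel_measurable M"
  shows "(\<lambda>\<omega>. \<chi> t. f t \<omega>) \<in> borel_measurable M"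
proof (subst borel_measurable_euclidean_space, intro ballI)
  fix i :: "real^'t" assume "i \<in> Basis"
  then obtain j where "i = axis j 1" by (auto simp: Basis_vec_def)
  then show "(\<lambda>\<omega>. (\<chi> t. f t \<omega>) \<bullet> i) \<in> borel_measurable M"
    by (simp add: inner_axis)
qed

lemma measurable_vec_nth_snd[measurable]:
  "(\<lambda>p::(real^'t::finite) \<times> 't. fst p $ snd p) \<in> borel_measurable (borel \<Otimes>\<^sub>M count_space UNIV)"
  by (rule measurable_compose_countable[where f="\<lambda>i p. fst p $ i" and g=snd])
    (simp_all add: measurable_compose[OF measurable_fst borel_measurable_nth])

lemma abs_Max_range_le_sum_abs:
  fixes f :: "'t::finite \<Rightarrow> real"
  shows "\<bar>Max (range f)\<bar> \<le> (\<Sum>t\<in>UNIV. \<bar>f t\<bar>)"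
proof -
  have "Max (range f) \<in> range f"
    by (rule Max_in) auto
  then obtain t where "Max (range f) = f t"
    by blast
  then show ?thesis
    using member_le_sum[of t UNIV "\<lambda>t. \<bar>f t\<bar>"] by simp
qed

lemma distr_pair_measure_pmf_snd:
  assumes "prob_space P"
  shows "distr (P \<Otimes>\<^sub>M measure_pmf \<mu>) (count_space UNIV) snd = measure_pmf \<mu>"
proof (rule measure_eqI)
  fix A assume "A \<in> sets (distr (P \<Otimes>\<^sub>M measure_pmf \<mu>) (count_space UNIV) snd)"
  then have "emeasure (distr (P \<Otimes>\<^sub>M measure_pmf \<mu>) (count_space UNIV) snd) A
      = emeasure (P \<Otimes>\<^sub>M measure_pmf \<mu>) (space P \<times> A)"
    by (subst emeasure_distr) (auto simp: space_pair_measure intro!: arg_cong2[where f=emeasure])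
  also have "\<dots> = emeasure (measure_pmf \<mu>) A"
    using assms by (simp add: measure_pmf.emeasure_pair_measure_Times prob_space.emeasure_space_1)
  finally show "emeasure (distr (P \<Otimes>\<^sub>M measure_pmf \<mu>) (count_space UNIV) snd) A
      = emeasure (measure_pmf \<mu>) A" .
qed simp

lemma measure_pmf_Abs_pmf_distr:
  fixes Z :: "'a \<Rightarrow> 'b::countable"
  assumes "prob_space M" and "Z \<in> measurable M (count_space UNIV)"
  shows "measure_pmf (Abs_pmf (distr M (count_space UNIV) Z)) = distr M (count_space UNIV) Z"
proof (rule Abs_pmf_inverse, intro CollectI conjI)
  show law: "prob_space (distr M (count_space UNIV) Z)"
    using assms by (rule prob_space.prob_space_distr)
  interpret law: prob_space "distr M (count_space UNIV) Z"
    by (rule law)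
  show sets: "sets (distr M (count_space UNIV) Z) = UNIV"
    by simp
  show "AE x in distr M (count_space UNIV) Z. measure (distr M (count_space UNIV) Z) {x} \<noteq> 0"
    by (subst law.AE_support_countable[OF sets]) (auto intro!: exI[of _ UNIV])
qed

lemma measurable_argmax_finite:
  fixes f :: "'t::finite \<Rightarrow> 'a \<Rightarrow> real"
  assumes [measurable]: "\<And>t. f t \<in> borel_measurable M"
  obtains Z where "Z \<in> measurable M (count_space UNIV)"
    and "\<And>\<omega>. f (Z \<omega>) \<omega> = Max (range (\<lambda>t. f t \<omega>))"
proof -
  define F where "F = (\<lambda>\<omega>. Max (range (\<lambda>t. f t \<omega>)))"
  have [measurable]: "F \<in> borel_measurable M"
    unfolding F_def by (rule borel_measurable_Max) simp_all
  obtain ts where ts: "set ts = (UNIV :: 't set)"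
    using finite_list[of "UNIV :: 't set"] by auto
  \<comment> \<open>choosing the first maximiser in a fixed enumeration keeps the selection measurable\<close>
  define Z where "Z \<omega> = ts ! (LEAST i. f (ts ! i) \<omega> = F \<omega>)" for \<omega>
  have "Z \<in> measurable M (count_space UNIV)"
    unfolding Z_def by measurable
  moreover have "f (Z \<omega>) \<omega> = F \<omega>" for \<omega>
  proof -
    have "F \<omega> \<in> range (\<lambda>t. f t \<omega>)"
      unfolding F_def by (rule Max_in) simp_all
    then obtain t where "F \<omega> = f t \<omega>"
      by blast
    moreover obtain i where "ts ! i = t"
      using ts by (metis UNIV_I in_set_conv_nth)
    ultimately have "\<exists>i. f (ts ! i) \<omega> = F \<omega>"
      by auto
    then show ?thesis
      unfolding Z_def by (rule LeastI_ex)
  qed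
  ultimately show thesis
    using that unfolding F_def by blast
qed

lemma coupling_measurable_cong:
  assumes "coupling P \<mu> C"
  shows "measurable C N = measurable (borel \<Otimes>\<^sub>M count_space UNIV) N"
  using assms by (intro measurable_cong_sets) (auto simp: coupling_def)

lemma coupling_pair_measure:
  assumes "prob_space P" and sets_P: "sets P = sets borel"
  shows "coupling P \<mu> (P \<Otimes>\<^sub>M measure_pmf \<mu>)"
  unfolding coupling_def
proof (intro conjI)
  show "prob_space (P \<Otimes>\<^sub>M measure_pmf \<mu>)"
    using assms(1) by (intro prob_space_pair) (simp_all add: prob_space_measure_pmf)
  show "sets (P \<Otimes>\<^sub>M measure_pmf \<mu>) = sets (borel \<Otimes>\<^sub>M count_space UNIV)"
    by (rule sets_pair_measure_cong) (simp_all add: sets_P)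
  have "distr (P \<Otimes>\<^sub>M measure_pmf \<mu>) borel fst = distr (P \<Otimes>\<^sub>M measure_pmf \<mu>) P fst"
    by (rule distr_cong) (simp_all add: sets_P)
  then show "distr (P \<Otimes>\<^sub>M measure_pmf \<mu>) borel fst = P"
    by (simp add: measure_pmf.distr_pair_fst)
  show "distr (P \<Otimes>\<^sub>M measure_pmf \<mu>) (count_space UNIV) snd = measure_pmf \<mu>"
    using assms(1) by (rule distr_pair_measure_pmf_snd)
qed

lemma coupling_distr_pair:
  fixes Y :: "'a \<Rightarrow> real^'t::finite" and Z :: "'a \<Rightarrow> 't"
  assumes M: "prob_space M"
    and [measurable]: "Y \<in> borel_measurable M" "Z \<in> measurable M (count_space UNIV)"
  shows "coupling (distr M borel Y) (Abs_pmf (distr M (count_space UNIV) Z))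
           (distr M (borel \<Otimes>\<^sub>M count_space UNIV) (\<lambda>\<omega>. (Y \<omega>, Z \<omega>)))"
  unfolding coupling_def
proof (intro conjI)
  show "prob_space (distr M (borel \<Otimes>\<^sub>M count_space UNIV) (\<lambda>\<omega>. (Y \<omega>, Z \<omega>)))"
    using M by (rule prob_space.prob_space_distr) simp
  show "distr (distr M (borel \<Otimes>\<^sub>M count_space UNIV) (\<lambda>\<omega>. (Y \<omega>, Z \<omega>))) borel fst
      = distr M borel Y"
    by (subst distr_distr) (simp_all add: comp_def)
  show "distr (distr M (borel \<Otimes>\<^sub>M count_space UNIV) (\<lambda>\<omega>. (Y \<omega>, Z \<omega>))) (count_space UNIV) snd
      = measure_pmf (Abs_pmf (distr M (count_space UNIV) Z))"
    unfolding measure_pmf_Abs_pmf_distr[OF M assms(3)] by (subst distr_distr) (simp_all add: comp_def)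
qed simp

context
  fixes P :: "(real^'t::finite) measure" and \<mu> :: "'t pmf" and C
  assumes coupling: "coupling P \<mu> C"
begin

interpretation C: prob_space C
  using coupling by (simp add: coupling_def)

lemma coupling_distr_fst: "distr C borel fst = P"
  and coupling_distr_snd: "distr C (count_space UNIV) snd = measure_pmf \<mu>"
  using coupling by (simp_all add: coupling_def)

lemma coupling_measurable_fst[measurable]: "fst \<in> borel_measurable C"
  and coupling_measurable_snd[measurable]: "snd \<in> measurable C (count_space UNIV)"
  and coupling_measurable_vec_nth_snd[measurable]: "(\<lambda>p. fst p $ snd p) \<in> borel_measurable C"
  by (simp_all add: coupling_measurable_cong[OF coupling])

interpretation P: prob_space P
  unfolding coupling_distr_fst[symmetric] by (rule C.prob_space_distr) simp

lemma sets_coupling_fst_marginal: "sets P = sets borel"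
  by (simp add: coupling_distr_fst[symmetric])

lemma integrable_coupling_fst_iff:
  fixes f :: "real^'t \<Rightarrow> real"
  assumes "f \<in> borel_measurable borel"
  shows "integrable C (\<lambda>p. f (fst p)) \<longleftrightarrow> integrable P f"
  using integrable_distr_eq[OF coupling_measurable_fst assms] by (simp add: coupling_distr_fst)

lemma integral_coupling_fst:
  fixes f :: "real^'t \<Rightarrow> real"
  assumes "f \<in> borel_measurable borel"
  shows "(\<integral>p. f (fst p) \<partial>C) = (\<integral>x. f x \<partial>P)"
  using integral_distr[OF coupling_measurable_fst assms] by (simp add: coupling_distr_fst)

lemma integrable_coupling_snd: "integrable C (\<lambda>p. g (snd p) :: real)"
proof -
  have "integrable (distr C (count_space UNIV) snd) g"
    unfolding coupling_distr_snd by (rule integrable_measure_pmf_finite) simp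
  then show ?thesis
    by (simp add: integrable_distr_eq)
qed

lemma integral_coupling_snd: "(\<integral>p. g (snd p) \<partial>C) = (\<Sum>t\<in>UNIV. g t * pmf \<mu> t)"
proof -
  have "(\<integral>p. g (snd p) \<partial>C) = (\<integral>t. g t \<partial>distr C (count_space UNIV) snd)"
    by (simp add: integral_distr)
  also have "\<dots> = (\<Sum>t\<in>UNIV. g t * pmf \<mu> t)"
    unfolding coupling_distr_snd by (rule integral_measure_pmf_real) simp_all
  finally show ?thesis .
qed

lemma integrable_coupling_vec_nth_snd:
  assumes "\<And>t. integrable P (\<lambda>x. x $ t)"
  shows "integrable C (\<lambda>p. fst p $ snd p)"
proof (rule Bochner_Integration.integrable_bound)
  show "integrable C (\<lambda>p. \<Sum>t\<in>UNIV. \<bar>fst p $ t\<bar>)"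
    using assms by (subst integrable_coupling_fst_iff) auto
  show "AE p in C. norm (fst p $ snd p) \<le> norm (\<Sum>t\<in>UNIV. \<bar>fst p $ t\<bar>)"
    by (auto intro!: AE_I2 member_le_sum)
qed simp

lemma integral_coupling_vec_nth_snd_plus:
  assumes "\<And>t. integrable P (\<lambda>x. x $ t)"
  shows "(\<integral>p. fst p $ snd p + m (snd p) \<partial>C)
           = (\<integral>p. fst p $ snd p \<partial>C) + (\<Sum>t\<in>UNIV. m t * pmf \<mu> t)"
  by (simp add: Bochner_Integration.integral_add[OF integrable_coupling_vec_nth_snd[OF assms]
        integrable_coupling_snd] integral_coupling_snd)

lemma integral_coupling_vec_nth_snd_plus_le:
  assumes "\<And>t. integrable P (\<lambda>x. x $ t)"
  shows "(\<integral>p. fst p $ snd p \<partial>C) + (\<Sum>t\<in>UNIV. m t * pmf \<mu> t)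
           \<le> (\<integral>x. Max (range (\<lambda>t. x $ t + m t)) \<partial>P)"
proof -
  have Max_measurable: "(\<lambda>x. Max (range (\<lambda>t. x $ t + m t))) \<in> borel_measurable borel"
    by (rule borel_measurable_Max) simp_all
  have "integrable P (\<lambda>x. Max (range (\<lambda>t. x $ t + m t)))"
  proof (rule Bochner_Integration.integrable_bound)
    show "integrable P (\<lambda>x. \<Sum>t\<in>UNIV. \<bar>x $ t + m t\<bar>)"
      using assms by auto
    show "(\<lambda>x. Max (range (\<lambda>t. x $ t + m t))) \<in> borel_measurable P"
      using Max_measurable by (simp add: measurable_cong_sets[OF sets_coupling_fst_marginal refl])
    show "AE x in P. norm (Max (range (\<lambda>t. x $ t + m t))) \<le> norm (\<Sum>t\<in>UNIV. \<bar>x $ t + m t\<bar>)"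
      by (auto intro!: AE_I2 abs_Max_range_le_sum_abs)
  qed
  then have "integrable C (\<lambda>p. Max (range (\<lambda>t. fst p $ t + m t)))"
    by (subst integrable_coupling_fst_iff) auto
  then have "(\<integral>p. fst p $ snd p + m (snd p) \<partial>C) \<le> (\<integral>p. Max (range (\<lambda>t. fst p $ t + m t)) \<partial>C)"
    using integrable_coupling_vec_nth_snd[OF assms] integrable_coupling_snd
    by (intro integral_mono) auto
  then show ?thesis
    by (simp add: integral_coupling_vec_nth_snd_plus[OF assms] integral_coupling_fst[OF Max_measurable])
qed

end

lemma fernique_plus_le_integral_Max:
  assumes "prob_space P" and "sets P = sets borel" and "\<And>t. integrable P (\<lambda>x. x $ t)"
  shows "fernique P \<mu> + (\<Sum>t\<in>UNIV. m t * pmf \<mu> t) \<le> (\<integral>x. Max (range (\<lambda>t. x $ t + m t)) \<partial>P)"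
proof -
  have "fernique P \<mu> \<le> (\<integral>x. Max (range (\<lambda>t. x $ t + m t)) \<partial>P) - (\<Sum>t\<in>UNIV. m t * pmf \<mu> t)"
    unfolding fernique_def
  proof (rule cSup_least)
    show "{\<integral>p. fst p $ snd p \<partial>C | C. coupling P \<mu> C} \<noteq> {}"
      using coupling_pair_measure[OF assms(1,2)] by blast
  next
    fix r assume "r \<in> {\<integral>p. fst p $ snd p \<partial>C | C. coupling P \<mu> C}"
    then obtain C where "coupling P \<mu> C" and "r = (\<integral>p. fst p $ snd p \<partial>C)"
      by blast
    then show "r \<le> (\<integral>x. Max (range (\<lambda>t. x $ t + m t)) \<partial>P) - (\<Sum>t\<in>UNIV. m t * pmf \<mu> t)"
      using integral_coupling_vec_nth_snd_plus_le[OF _ assms(3), of \<mu> C m] by simp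
  qed
  then show ?thesis
    by simp
qed

lemma integral_le_fernique:
  assumes "coupling P \<mu> C" and "\<And>t. integrable P (\<lambda>x. x $ t)"
  shows "(\<integral>p. fst p $ snd p \<partial>C) \<le> fernique P \<mu>"
  unfolding fernique_def
proof (rule cSup_upper)
  have "(\<integral>p. fst p $ snd p \<partial>C') \<le> (\<integral>x. Max (range (\<lambda>t. x $ t)) \<partial>P)"
    if "coupling P \<mu> C'" for C'
    using integral_coupling_vec_nth_snd_plus_le[OF that assms(2), of "\<lambda>_. 0"] by simp
  then show "bdd_above {\<integral>p. fst p $ snd p \<partial>C | C. coupling P \<mu> C}"
    by (intro bdd_aboveI) blast
qed (use assms(1) in blast)

theorem integral_Max_eq_SUP_fernique:
  assumes "prob_space P" and "sets P = sets borel" and "\<And>t. integrable P (\<lambda>x. x $ t)"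
  shows "(\<integral>x. Max (range (\<lambda>t. x $ t + m t)) \<partial>P)
           = (SUP \<mu>. fernique P \<mu> + (\<Sum>t\<in>UNIV. m t * pmf \<mu> t))"
proof (rule antisym)
  have measurable_P: "measurable P N = measurable borel N" for N :: "'b measure"
    using assms(2) by (rule measurable_cong_sets) simp
  have "(\<lambda>x. x $ t + m t) \<in> borel_measurable P" for t
    unfolding measurable_P by simp
  then obtain Z where Z[measurable]: "Z \<in> measurable P (count_space UNIV)"
    and Z_max: "\<And>x. x $ Z x + m (Z x) = Max (range (\<lambda>t. x $ t + m t))"
    using measurable_argmax_finite[of "\<lambda>t x. x $ t + m t" P] by blast
  define \<mu> where "\<mu> = Abs_pmf (distr P (count_space UNIV) Z)"
  define C where "C = distr P (borel \<Otimes>\<^sub>M count_space UNIV) (\<lambda>x. (x, Z x))"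
  have "coupling (distr P borel (\<lambda>x. x)) \<mu> C"
    unfolding \<mu>_def C_def
    by (rule coupling_distr_pair[OF assms(1) _ Z]) (simp add: measurable_P)
  then have coupling: "coupling P \<mu> C"
    using assms(2) by (simp add: distr_id2)
  have "(\<integral>x. Max (range (\<lambda>t. x $ t + m t)) \<partial>P) = (\<integral>p. fst p $ snd p + m (snd p) \<partial>C)"
    unfolding C_def using Z by (subst integral_distr) (simp_all add: Z_max measurable_P)
  also have "\<dots> = (\<integral>p. fst p $ snd p \<partial>C) + (\<Sum>t\<in>UNIV. m t * pmf \<mu> t)"
    using coupling assms(3) by (rule integral_coupling_vec_nth_snd_plus)
  also have "\<dots> \<le> fernique P \<mu> + (\<Sum>t\<in>UNIV. m t * pmf \<mu> t)"
    using integral_le_fernique[OF coupling assms(3)] by simp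
  also have "\<dots> \<le> (SUP \<mu>. fernique P \<mu> + (\<Sum>t\<in>UNIV. m t * pmf \<mu> t))"
    using fernique_plus_le_integral_Max[OF assms] by (intro cSUP_upper bdd_aboveI) auto
  finally show "(\<integral>x. Max (range (\<lambda>t. x $ t + m t)) \<partial>P) \<le> \<dots>" .
  show "(SUP \<mu>. fernique P \<mu> + (\<Sum>t\<in>UNIV. m t * pmf \<mu> t)) \<le> (\<integral>x. Max (range (\<lambda>t. x $ t + m t)) \<partial>P)"
    using fernique_plus_le_integral_Max[OF assms] by (intro cSUP_least) auto
qed

theorem mainTheorem4:
  fixes M :: "'a measure" and X :: "'t::finite \<Rightarrow> 'a \<Rightarrow> real" and m :: "'t \<Rightarrow> real"
  assumes "prob_space M"
    and "\<And>t. integrable M (X t)"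
  shows "(\<integral>\<omega>. Max (range (\<lambda>t. X t \<omega> + m t)) \<partial>M) =
         (SUP \<mu>::'t pmf. fernique (distr M borel (\<lambda>\<omega>. \<chi> t. X t \<omega>)) \<mu> + (\<Sum>t\<in>UNIV. m t * pmf \<mu> t))"
proof -
  have [measurable]: "X t \<in> borel_measurable M" for t
    using assms(2) by auto
  let ?P = "distr M borel (\<lambda>\<omega>. \<chi> t. X t \<omega>)"
  have "prob_space ?P"
    using assms(1) by (rule prob_space.prob_space_distr) simp
  moreover have "integrable ?P (\<lambda>x. x $ t)" for t
    using assms(2) by (simp add: integrable_distr_eq)
  ultimately have "(\<integral>x. Max (range (\<lambda>t. x $ t + m t)) \<partial>?P)
      = (SUP \<mu>. fernique ?P \<mu> + (\<Sum>t\<in>UNIV. m t * pmf \<mu> t))"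
    by (intro integral_Max_eq_SUP_fernique) simp_all
  then show ?thesis
    by (simp add: integral_distr)
qed

end
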